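(* For every integer $r\ge 3$ and every $\varepsilon>0$, there exist a positive integer $n$ and an $n$-vertex $K_r$-free graph $G$ such that for every pair of non-adjacent vertices $u,v$, the induced subgraph $G[N(u)\cap N(v)]$ contains at least $\varepsilon n^{r-2}$ copies of $K_{r-2}$, but $G$ has no $K_r$-free homomorphic image of size smaller than $2^{\frac{1}{8r^r\varepsilon}}$ (i.e., there is no $K_r$-free graph $F$ with fewer than $2^{\frac{1}{8r^r\varepsilon}}$ vertices admitting a homomorphism $G\to F$).
   Context: A homomorphism $G\to F$ is a map $\varphi:V(G)\to V(F)$ with $\varphi(u)\varphi(v)\in E(F)$ whenever $uv\in E(G)$. *)

theory Defs
  imports Complex_Main
begin

definition sgraph :: "'a set \<Rightarrow> ('a \<Rightarrow> 'a \<Rightarrow> bool) \<Rightarrow> bool" where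
  "sgraph V E \<longleftrightarrow> finite V \<and> (\<forall>x y. E x y \<longrightarrow> x \<in> V \<and> y \<in> V)
     \<and> (\<forall>x y. E x y \<longrightarrow> E y x) \<and> (\<forall>x. \<not> E x x)"

definition is_clique :: "('a \<Rightarrow> 'a \<Rightarrow> bool) \<Rightarrow> 'a set \<Rightarrow> bool" where
  "is_clique E S \<longleftrightarrow> (\<forall>x\<in>S. \<forall>y\<in>S. x \<noteq> y \<longrightarrow> E x y)"

definition Kr_free :: "'a set \<Rightarrow> ('a \<Rightarrow> 'a \<Rightarrow> bool) \<Rightarrow> nat \<Rightarrow> bool" where
  "Kr_free V E r \<longleftrightarrow> \<not> (\<exists>S. S \<subseteq> V \<and> finite S \<and> card S = r \<and> is_clique E S)"

definition nbhd :: "'a set \<Rightarrow> ('a \<Rightarrow> 'a \<Rightarrow> bool) \<Rightarrow> 'a \<Rightarrow> 'a set" where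
  "nbhd V E u = {w \<in> V. E u w}"

definition num_Kk :: "('a \<Rightarrow> 'a \<Rightarrow> bool) \<Rightarrow> 'a set \<Rightarrow> nat \<Rightarrow> nat" where
  "num_Kk E S k = card {K. K \<subseteq> S \<and> finite K \<and> card K = k \<and> is_clique E K}"

definition graph_hom :: "'a set \<Rightarrow> ('a \<Rightarrow> 'a \<Rightarrow> bool) \<Rightarrow> 'b set \<Rightarrow> ('b \<Rightarrow> 'b \<Rightarrow> bool) \<Rightarrow> ('a \<Rightarrow> 'b) \<Rightarrow> bool" where
  "graph_hom V E W F \<phi> \<longleftrightarrow> (\<forall>x\<in>V. \<phi> x \<in> W) \<and> (\<forall>x y. E x y \<longrightarrow> F (\<phi> x) (\<phi> y))"

end

theory Submission
  imports Defs "HOL-Library.FuncSet" "HOL-Library.Disjoint_Sets"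
begin

text \<open>
  Let \<open>H\<close> consist of the cube \<open>{0,1}^k\<close>; for every coordinate \<open>i\<close> and bit \<open>b\<close> a block of
  \<open>N = 2^k\<close> vertices joined to the cube vertices \<open>x\<close> with \<open>x i = b\<close>, the blocks of \<open>(i, b)\<close>
  and \<open>(i, \<not> b)\<close> being completely joined; and \<open>2kN\<close> hubs joined to the whole cube.
  Then \<open>H\<close> is triangle-free, and any two non-adjacent vertices of \<open>H\<close> have at least
  \<open>2^(k-2)\<close> common neighbours in \<open>H\<close>. Let \<open>G\<close> be the join of \<open>H\<close> with a complete
  \<open>(r-3)\<close>-partite graph whose parts have \<open>h = |V(H)|\<close> vertices. Then \<open>G\<close> is \<open>K_r\<close>-free, and
  the common neighbourhood of two non-adjacent vertices contains at least \<open>2^(k-2) h^(r-3)\<close>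
  copies of \<open>K_(r-2)\<close>; for \<open>k = \<lceil>1/(8 r^r \<epsilon>)\<rceil>\<close> this is at least \<open>\<epsilon> |V(G)|^(r-2)\<close>.

  A homomorphism of \<open>G\<close> into a \<open>K_r\<close>-free graph is injective on the cube: identifying two cube
  vertices creates a triangle in the image of \<open>H\<close>, hence a \<open>K_r\<close> in the image of \<open>G\<close>. So every
  \<open>K_r\<close>-free homomorphic image has at least \<open>2^k \<ge> 2^(1/(8 r^r \<epsilon>))\<close> vertices.
  If \<open>1/(8 r^r \<epsilon>) \<le> 1\<close>, a single edge does the job.
\<close>

definition codegree_cliques_ge :: "'a set \<Rightarrow> ('a \<Rightarrow> 'a \<Rightarrow> bool) \<Rightarrow> nat \<Rightarrow> real \<Rightarrow> bool" where
  "codegree_cliques_ge V E k c \<longleftrightarrow>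
     (\<forall>u\<in>V. \<forall>v\<in>V. u \<noteq> v \<and> \<not> E u v \<longrightarrow> c \<le> real (num_Kk E (nbhd V E u \<inter> nbhd V E v) k))"

definition no_small_Kr_free_hom_image :: "'a set \<Rightarrow> ('a \<Rightarrow> 'a \<Rightarrow> bool) \<Rightarrow> nat \<Rightarrow> real \<Rightarrow> bool" where
  "no_small_Kr_free_hom_image V E r \<beta> \<longleftrightarrow>
     \<not> (\<exists>(W :: nat set) F \<phi>. sgraph W F \<and> Kr_free W F r \<and> real (card W) < \<beta> \<and> graph_hom V E W F \<phi>)"

definition exists_dense_rigid_Kr_free_graph :: "nat \<Rightarrow> real \<Rightarrow> real \<Rightarrow> bool" where
  "exists_dense_rigid_Kr_free_graph r \<epsilon> \<beta> \<longleftrightarrow> (\<exists>n>0. \<exists>E. sgraph {0..<n} E \<and> Kr_free {0..<n} E r \<and>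
     codegree_cliques_ge {0..<n} E (r - 2) (\<epsilon> * real n ^ (r - 2)) \<and>
     no_small_Kr_free_hom_image {0..<n} E r \<beta>)"

lemma no_small_Kr_free_hom_image_mono:
  "no_small_Kr_free_hom_image V E r \<beta> \<Longrightarrow> \<beta>' \<le> \<beta> \<Longrightarrow> no_small_Kr_free_hom_image V E r \<beta>'"
  unfolding no_small_Kr_free_hom_image_def by force

lemma exists_dense_rigid_Kr_free_graph_mono:
  "exists_dense_rigid_Kr_free_graph r \<epsilon> \<beta> \<Longrightarrow> \<beta>' \<le> \<beta> \<Longrightarrow> exists_dense_rigid_Kr_free_graph r \<epsilon> \<beta>'"
  unfolding exists_dense_rigid_Kr_free_graph_def using no_small_Kr_free_hom_image_mono by meson

lemma finite_cliques: "finite T \<Longrightarrow> finite {K. K \<subseteq> T \<and> finite K \<and> card K = k \<and> is_clique E K}"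
  by (rule finite_subset[of _ "Pow T"]) auto

lemma Kr_free_iff_num_Kk_eq_0:
  assumes "finite V"
  shows "Kr_free V E r \<longleftrightarrow> num_Kk E V r = 0"
  using finite_cliques[OF assms] by (auto simp: Kr_free_def num_Kk_def)

lemma not_Kr_free_if_hom_clique:
  assumes "sgraph W F" "finite T" "card T = r" "\<phi> ` T \<subseteq> W"
    and clique: "\<And>a b. a \<in> T \<Longrightarrow> b \<in> T \<Longrightarrow> a \<noteq> b \<Longrightarrow> F (\<phi> a) (\<phi> b)"
  shows "\<not> Kr_free W F r"
proof -
  have "inj_on \<phi> T"
    using clique \<open>sgraph W F\<close> unfolding inj_on_def sgraph_def by metis
  then have "card (\<phi> ` T) = r"
    using \<open>card T = r\<close> by (simp add: card_image)
  moreover have "is_clique F (\<phi> ` T)"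
    using clique by (auto simp: is_clique_def)
  ultimately show ?thesis
    using assms(2,4) unfolding Kr_free_def by blast
qed

lemma prod_card_le_num_Kk:
  assumes "finite T" "finite I"
    and sub: "\<And>i. i \<in> I \<Longrightarrow> Y i \<subseteq> T"
    and disj: "disjoint_family_on Y I"
    and complete: "\<And>i j y z. i \<in> I \<Longrightarrow> j \<in> I \<Longrightarrow> i \<noteq> j \<Longrightarrow> y \<in> Y i \<Longrightarrow> z \<in> Y j \<Longrightarrow> E y z"
  shows "(\<Prod>i\<in>I. card (Y i)) \<le> num_Kk E T (card I)"
proof -
  have inj_choice: "inj_on g I" if "g \<in> Pi\<^sub>E I Y" for g
    using that disj by (fastforce simp: inj_on_def disjoint_family_on_def)
  have "inj_on (\<lambda>g. g ` I) (Pi\<^sub>E I Y)"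
  proof (rule inj_onI)
    fix g g' assume g: "g \<in> Pi\<^sub>E I Y" and g': "g' \<in> Pi\<^sub>E I Y" and eq: "g ` I = g' ` I"
    show "g = g'"
    proof (rule PiE_ext[OF g g'])
      fix i assume i: "i \<in> I"
      then obtain j where "j \<in> I" "g i = g' j"
        using eq by (metis imageE imageI)
      then show "g i = g' i"
        using i g g' disj by (fastforce simp: disjoint_family_on_def)
    qed
  qed
  moreover have "(\<lambda>g. g ` I) ` Pi\<^sub>E I Y \<subseteq> {K. K \<subseteq> T \<and> finite K \<and> card K = card I \<and> is_clique E K}"
    using sub complete inj_choice \<open>finite I\<close>
    by (fastforce simp: card_image is_clique_def)
  ultimately have "card (Pi\<^sub>E I Y) \<le> num_Kk E T (card I)"
    unfolding num_Kk_def by (rule card_inj_on_le[OF _ _ finite_cliques[OF \<open>finite T\<close>]])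
  then show ?thesis
    by (simp add: card_PiE[OF \<open>finite I\<close>])
qed

section \<open>Relabelling the vertices\<close>

definition pullback :: "'b set \<Rightarrow> ('b \<Rightarrow> 'a) \<Rightarrow> ('a \<Rightarrow> 'a \<Rightarrow> bool) \<Rightarrow> 'b \<Rightarrow> 'b \<Rightarrow> bool" where
  "pullback V' f E u v \<longleftrightarrow> u \<in> V' \<and> v \<in> V' \<and> E (f u) (f v)"

lemma sgraph_pullback:
  assumes "sgraph V E" "bij_betw f V' V"
  shows "sgraph V' (pullback V' f E)"
  using assms bij_betw_finite[OF assms(2)] unfolding sgraph_def pullback_def by auto

lemma is_clique_pullback:
  assumes "inj_on f V'" "S \<subseteq> V'"
  shows "is_clique (pullback V' f E) S \<longleftrightarrow> is_clique E (f ` S)"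
proof -
  have "\<forall>x\<in>S. \<forall>y\<in>S. f x = f y \<longleftrightarrow> x = y"
    using assms by (auto simp: inj_on_def)
  then show ?thesis
    using assms(2) unfolding is_clique_def pullback_def by blast
qed

lemma num_Kk_pullback:
  assumes "inj_on f V'" "S \<subseteq> V'"
  shows "num_Kk (pullback V' f E) S k = num_Kk E (f ` S) k"
proof -
  let ?cliques = "\<lambda>E S. {K. K \<subseteq> S \<and> finite K \<and> card K = k \<and> is_clique E K}"
  have inj: "inj_on f L" if "L \<subseteq> S" for L
    using assms that inj_on_subset by blast
  have image_clique: "f ` L \<in> ?cliques E (f ` S) \<longleftrightarrow> L \<in> ?cliques (pullback V' f E) S"
    if "L \<subseteq> S" for L
    using that inj[OF that] assms
    by (auto simp: is_clique_pullback card_image finite_image_iff)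
  have "?cliques E (f ` S) = (`) f ` ?cliques (pullback V' f E) S"
  proof (intro equalityI subsetI)
    fix K assume K: "K \<in> ?cliques E (f ` S)"
    then obtain L where "L \<subseteq> S" "K = f ` L"
      by (auto simp: subset_image_iff)
    then show "K \<in> (`) f ` ?cliques (pullback V' f E) S"
      using K image_clique by blast
  qed (use image_clique in blast)
  moreover have "inj_on ((`) f) (?cliques (pullback V' f E) S)"
    using inj_on_image_Pow[OF inj[OF order_refl]] by (rule inj_on_subset) auto
  ultimately show ?thesis
    by (simp add: num_Kk_def card_image)
qed

lemma Kr_free_pullback:
  assumes "sgraph V E" "bij_betw f V' V"
  shows "Kr_free V' (pullback V' f E) r \<longleftrightarrow> Kr_free V E r"
proof -
  have "finite V" "finite V'"
    using assms bij_betw_finite by (auto simp: sgraph_def)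
  moreover have "num_Kk (pullback V' f E) V' r = num_Kk E V r"
    using num_Kk_pullback[of f V' V'] assms(2) by (simp add: bij_betw_def)
  ultimately show ?thesis
    by (simp add: Kr_free_iff_num_Kk_eq_0)
qed

lemma nbhd_pullback:
  assumes "bij_betw f V' V" "u \<in> V'"
  shows "f ` nbhd V' (pullback V' f E) u = nbhd V E (f u)"
  using assms unfolding nbhd_def pullback_def bij_betw_def by auto

lemma codegree_cliques_ge_pullback:
  assumes "bij_betw f V' V" "codegree_cliques_ge V E k c"
  shows "codegree_cliques_ge V' (pullback V' f E) k c"
  unfolding codegree_cliques_ge_def
proof (intro ballI impI)
  fix u v assume uv: "u \<in> V'" "v \<in> V'" "u \<noteq> v \<and> \<not> pullback V' f E u v"
  let ?E' = "pullback V' f E"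
  have inj: "inj_on f V'"
    using assms(1) by (simp add: bij_betw_def)
  have "f u \<in> V" "f v \<in> V" "f u \<noteq> f v" "\<not> E (f u) (f v)"
    using uv assms(1) inj by (auto simp: bij_betw_def pullback_def inj_on_def)
  then have "c \<le> real (num_Kk E (nbhd V E (f u) \<inter> nbhd V E (f v)) k)"
    using assms(2) by (simp add: codegree_cliques_ge_def)
  also have "nbhd V E (f u) \<inter> nbhd V E (f v) = f ` (nbhd V' ?E' u \<inter> nbhd V' ?E' v)"
    using nbhd_pullback[OF assms(1)] uv inj
    by (simp add: inj_on_image_Int nbhd_def)
  also have "num_Kk E \<dots> k = num_Kk ?E' (nbhd V' ?E' u \<inter> nbhd V' ?E' v) k"
    using inj by (intro num_Kk_pullback[symmetric]) (auto simp: nbhd_def)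
  finally show "c \<le> real (num_Kk ?E' (nbhd V' ?E' u \<inter> nbhd V' ?E' v) k)" .
qed

lemma graph_hom_pullback:
  assumes "sgraph V E" "bij_betw f V' V" "graph_hom V' (pullback V' f E) W F \<phi>"
  shows "graph_hom V E W F (\<phi> \<circ> inv_into V' f)"
proof -
  have "pullback V' f E (inv_into V' f x) (inv_into V' f y)" if "E x y" for x y
    using that assms(1,2) by (auto simp: pullback_def sgraph_def bij_betw_inv_into_right
        bij_betw_def inv_into_into)
  then show ?thesis
    using assms(2,3) by (auto simp: graph_hom_def bij_betw_def inv_into_into)
qed

lemma no_small_Kr_free_hom_image_pullback:
  assumes "sgraph V E" "bij_betw f V' V" "no_small_Kr_free_hom_image V E r \<beta>"
  shows "no_small_Kr_free_hom_image V' (pullback V' f E) r \<beta>"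
  using assms graph_hom_pullback[OF assms(1,2)]
  unfolding no_small_Kr_free_hom_image_def by blast

lemma relabel_to_nat_interval:
  assumes "sgraph V E" "Kr_free V E r" "codegree_cliques_ge V E k c"
    "no_small_Kr_free_hom_image V E r \<beta>"
  obtains E' :: "nat \<Rightarrow> nat \<Rightarrow> bool" where "sgraph {0..<card V} E'" "Kr_free {0..<card V} E' r"
    "codegree_cliques_ge {0..<card V} E' k c" "no_small_Kr_free_hom_image {0..<card V} E' r \<beta>"
proof -
  obtain f where f: "bij_betw f {0..<card V} V"
    using assms(1) ex_bij_betw_nat_finite[of V] by (auto simp: sgraph_def)
  show ?thesis
    using that[of "pullback {0..<card V} f E"] assms f
    by (simp add: sgraph_pullback Kr_free_pullback codegree_cliques_ge_pullback
        no_small_Kr_free_hom_image_pullback)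
qed

definition complete_on :: "'a set \<Rightarrow> 'a \<Rightarrow> 'a \<Rightarrow> bool" where
  "complete_on V u v \<longleftrightarrow> u \<in> V \<and> v \<in> V \<and> u \<noteq> v"

lemma sgraph_complete_on: "finite V \<Longrightarrow> sgraph V (complete_on V)"
  by (auto simp: sgraph_def complete_on_def)

lemma Kr_free_if_card_less: "finite V \<Longrightarrow> card V < r \<Longrightarrow> Kr_free V E r"
  by (auto simp: Kr_free_def dest: card_mono)

lemma codegree_cliques_ge_complete_on: "codegree_cliques_ge V (complete_on V) k c"
  by (simp add: codegree_cliques_ge_def complete_on_def)

lemma no_small_Kr_free_hom_image_complete_on:
  assumes "finite V"
  shows "no_small_Kr_free_hom_image V (complete_on V) r (card V)"
  unfolding no_small_Kr_free_hom_image_def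
proof clarify
  fix W :: "nat set" and F \<phi>
  assume W: "sgraph W F" "real (card W) < real (card V)" "graph_hom V (complete_on V) W F \<phi>"
  have "inj_on \<phi> V"
    using W(1,3) unfolding inj_on_def graph_hom_def sgraph_def complete_on_def by metis
  moreover have "\<phi> ` V \<subseteq> W" "finite W"
    using W(1,3) by (auto simp: graph_hom_def sgraph_def)
  ultimately have "card V \<le> card W"
    using card_inj_on_le by blast
  with W(2) show False
    by simp
qed

lemma exists_dense_rigid_Kr_free_graph_edge:
  assumes "3 \<le> r"
  shows "exists_dense_rigid_Kr_free_graph r \<epsilon> 2"
proof -
  let ?K2 = "complete_on {0..<2::nat}"
  have "Kr_free {0..<2} ?K2 r"
    using assms by (intro Kr_free_if_card_less) auto
  then show ?thesis
    unfolding exists_dense_rigid_Kr_free_graph_def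
    using sgraph_complete_on codegree_cliques_ge_complete_on
      no_small_Kr_free_hom_image_complete_on[of "{0..<2::nat}"]
    by (intro exI[of _ 2] conjI exI[of _ ?K2]) auto
qed

section \<open>The construction\<close>

text \<open>\<open>Cube x\<close> for \<open>x \<in> cube\<close> is a vertex of the cube, \<open>Lit i b m\<close> the \<open>m\<close>-th vertex of the
  block of \<open>(i, b)\<close>, \<open>Hub m\<close> a hub and \<open>Part j m\<close> the \<open>m\<close>-th vertex of the \<open>j\<close>-th part;
  which of them are actually vertices is decided by \<open>GV\<close> below.\<close>

datatype vtx = Cube "nat \<Rightarrow> bool" | Lit nat bool nat | Hub nat | Part nat nat

fun adj :: "vtx \<Rightarrow> vtx \<Rightarrow> bool" where
  "adj (Cube x) (Lit i b _) \<longleftrightarrow> x i = b"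
| "adj (Lit i b _) (Cube x) \<longleftrightarrow> x i = b"
| "adj (Cube _) (Hub _) \<longleftrightarrow> True"
| "adj (Hub _) (Cube _) \<longleftrightarrow> True"
| "adj (Lit i b _) (Lit j c _) \<longleftrightarrow> i = j \<and> b \<noteq> c"
| "adj (Part j _) (Part j' _) \<longleftrightarrow> j \<noteq> j'"
| "adj (Part _ _) _ \<longleftrightarrow> True"
| "adj _ (Part _ _) \<longleftrightarrow> True"
| "adj _ _ \<longleftrightarrow> False"

fun is_Part :: "vtx \<Rightarrow> bool" where
  "is_Part (Part _ _) \<longleftrightarrow> True"
| "is_Part _ \<longleftrightarrow> False"

lemma adj_sym: "adj u v \<longleftrightarrow> adj v u"
  by (cases u; cases v) auto

lemma adj_irrefl: "\<not> adj u u"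
  by (cases u) auto

lemma adj_Part: "\<not> is_Part u \<Longrightarrow> adj u (Part j m)"
  by (cases u) auto

lemma not_adj_Part: "\<not> adj (Part j m) w \<Longrightarrow> \<exists>m'. w = Part j m'"
  by (cases w) auto

lemma triangle_contains_Part: "adj a b \<Longrightarrow> adj b c \<Longrightarrow> adj a c \<Longrightarrow> is_Part a \<or> is_Part b \<or> is_Part c"
  by (cases a; cases b; cases c) auto

locale construction =
  fixes k r :: nat
  assumes k_ge_2: "2 \<le> k" and r_ge_3: "3 \<le> r"
begin

definition "N = (2::nat) ^ k"

text \<open>\<open>h = |HV|\<close>, so that \<open>|GV| \<le> (r - 2) h\<close>.\<close>
definition "h = N * (4 * k + 1)"

definition "cube = {..<k} \<rightarrow>\<^sub>E (UNIV :: bool set)"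

definition "CubeV = Cube ` cube"
definition "LitV = {Lit i b m | i b m. i < k \<and> m < N}"
definition "HubV = Hub ` {..<2 * k * N}"
definition "PartV j = Part j ` {..<h}"
definition "HV = CubeV \<union> LitV \<union> HubV"
definition "GV = HV \<union> (\<Union>j<r - 3. PartV j)"
definition "GE u v \<longleftrightarrow> u \<in> GV \<and> v \<in> GV \<and> adj u v"

lemma mem_GV [simp]:
  "Cube x \<in> GV \<longleftrightarrow> x \<in> cube"
  "Lit i b m \<in> GV \<longleftrightarrow> i < k \<and> m < N"
  "Hub m \<in> GV \<longleftrightarrow> m < 2 * k * N"
  "Part j m \<in> GV \<longleftrightarrow> j < r - 3 \<and> m < h"
  by (auto simp: GV_def HV_def CubeV_def LitV_def HubV_def PartV_def)

lemma mem_HV_iff: "v \<in> HV \<longleftrightarrow> v \<in> GV \<and> \<not> is_Part v"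
  by (cases v) (auto simp: GV_def HV_def CubeV_def LitV_def HubV_def PartV_def)

lemma N_eq: "N = 4 * 2 ^ (k - 2)"
proof -
  have "(2::nat) ^ k = 2 ^ (k - 2) * 2 ^ 2"
    using k_ge_2 by (metis le_add_diff_inverse2 power_add)
  then show ?thesis
    by (simp add: N_def)
qed

lemma N_pos: "0 < N"
  by (simp add: N_def)

lemma h_pos: "0 < h"
  by (simp add: h_def N_pos)

lemma card_cube: "card cube = N"
  by (simp add: cube_def card_PiE N_def)

lemma card_CubeV: "card CubeV = N"
  by (simp add: CubeV_def card_image inj_on_def card_cube)

lemma card_LitV: "card LitV = 2 * k * N"
proof -
  have "LitV = (\<lambda>(i, b, m). Lit i b m) ` ({..<k} \<times> UNIV \<times> {..<N})"
    by (force simp: LitV_def)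
  then show ?thesis
    by (simp add: card_image inj_on_def card_cartesian_product)
qed

lemma card_HubV: "card HubV = 2 * k * N"
  by (simp add: HubV_def card_image inj_on_def)

lemma card_PartV: "card (PartV j) = h"
  by (simp add: PartV_def card_image inj_on_def)

lemma finite_HV: "finite HV"
  using card_CubeV card_LitV card_HubV k_ge_2
  by (simp add: HV_def N_def card_ge_0_finite)

lemma card_HV_le: "card HV \<le> h"
proof -
  have "card HV \<le> card CubeV + card LitV + card HubV"
    unfolding HV_def by (meson card_Un_le add_right_mono le_trans)
  then show ?thesis
    by (simp add: card_CubeV card_LitV card_HubV h_def algebra_simps)
qed

lemma finite_GV: "finite GV"
  using finite_HV by (simp add: GV_def PartV_def)

lemma card_GV_le: "card GV \<le> (r - 2) * h"
proof -
  have "card GV \<le> card HV + card (\<Union>j<r - 3. PartV j)"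
    unfolding GV_def by (rule card_Un_le)
  also have "card (\<Union>j<r - 3. PartV j) \<le> (\<Sum>j<r - 3. card (PartV j))"
    by (rule card_UN_le) simp
  finally have "card GV \<le> h + (r - 3) * h"
    using card_HV_le by (simp add: card_PartV)
  also have "\<dots> = (r - 2) * h"
    using r_ge_3 by (simp add: Suc_diff_Suc numeral_3_eq_3 numeral_2_eq_2 flip: mult_Suc)
  finally show ?thesis .
qed

lemma sgraph_G: "sgraph GV GE"
  using finite_GV adj_irrefl by (auto simp: sgraph_def GE_def adj_sym)

lemma card_clique_HV_le: "is_clique GE K \<Longrightarrow> finite K \<Longrightarrow> card (K \<inter> HV) \<le> 2"
proof (rule ccontr)
  assume "is_clique GE K" "finite K" "\<not> card (K \<inter> HV) \<le> 2"
  then obtain T where "T \<subseteq> K \<inter> HV" "card T = 3"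
    by (metis obtain_subset_with_card_n not_less_eq_eq numeral_3_eq_3 numeral_2_eq_2)
  then obtain a b c where "T = {a, b, c}" "a \<noteq> b" "b \<noteq> c" "a \<noteq> c"
    by (auto simp: card_3_iff)
  then show False
    using \<open>T \<subseteq> K \<inter> HV\<close> \<open>is_clique GE K\<close> triangle_contains_Part[of a b c]
    by (auto simp: is_clique_def GE_def mem_HV_iff)
qed

lemma card_clique_Parts_le:
  assumes "is_clique GE K" "K \<subseteq> GV"
  shows "card (K - HV) \<le> r - 3"
proof -
  let ?index = "\<lambda>v. case v of Part j _ \<Rightarrow> j | _ \<Rightarrow> 0"
  have "inj_on ?index (K - HV)"
    using assms unfolding inj_on_def is_clique_def GE_def
    by (auto simp: mem_HV_iff subset_iff elim!: is_Part.elims) (metis adj.simps(6) vtx.inject(4))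
  moreover have "?index v < r - 3" if "v \<in> K - HV" for v
  proof -
    have "v \<in> GV" "is_Part v"
      using that assms(2) mem_HV_iff by auto
    then show ?thesis
      by (cases v) auto
  qed
  then have "?index ` (K - HV) \<subseteq> {..<r - 3}"
    by auto
  ultimately show ?thesis
    by (metis card_inj_on_le card_lessThan finite_lessThan)
qed

lemma Kr_free_G: "Kr_free GV GE r"
  unfolding Kr_free_def
proof (intro notI, elim exE conjE)
  fix K assume K: "K \<subseteq> GV" "finite K" "card K = r" "is_clique GE K"
  have "card K \<le> card (K \<inter> HV) + card (K - HV)"
    by (metis Int_Diff_Un card_Un_le)
  then show False
    using card_clique_HV_le[OF K(4,2)] card_clique_Parts_le[OF K(4,1)] K(3) r_ge_3 by linarith
qed

lemma hom_inj_on_CubeV: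
  assumes "sgraph W F" "Kr_free W F r" "graph_hom GV GE W F \<phi>"
  shows "inj_on \<phi> CubeV"
proof (rule inj_onI)
  fix u v assume "u \<in> CubeV" "v \<in> CubeV" and same: "\<phi> u = \<phi> v"
  then obtain x y where xy: "u = Cube x" "v = Cube y" "x \<in> cube" "y \<in> cube"
    by (auto simp: CubeV_def)
  show "u = v"
  proof (rule ccontr)
    assume "u \<noteq> v"
    then obtain i where i: "i < k" "x i \<noteq> y i"
      using xy PiE_ext[of x "{..<k}" "\<lambda>_. UNIV" y] by (auto simp: cube_def)
    txt \<open>Identifying the cube vertices \<open>x\<close> and \<open>y\<close> closes the path
      \<open>x, Lit i (x i), Lit i (y i), y\<close> into a triangle, which together with one vertex of
      every part is a \<open>K\<^sub>r\<close>.\<close>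
    define T where "T = {Cube x, Lit i (x i) 0, Lit i (y i) 0} \<union> (\<lambda>j. Part j 0) ` {..<r - 3}"
    have "T \<subseteq> GV"
      using xy i N_pos h_pos by (auto simp: T_def)
    then have "\<phi> ` T \<subseteq> W"
      using assms(3) by (auto simp: graph_hom_def)
    have "card T = r"
    proof -
      have "card {Cube x, Lit i (x i) 0, Lit i (y i) 0} = 3"
        using i by simp
      moreover have "card ((\<lambda>j. Part j 0) ` {..<r - 3}) = r - 3"
        by (simp add: card_image inj_on_def)
      ultimately show ?thesis
        using r_ge_3 unfolding T_def by (subst card_Un_disjoint) auto
    qed
    moreover have "F (\<phi> a) (\<phi> b)" if "a \<in> T" "b \<in> T" "a \<noteq> b" for a b
    proof -
      have "GE a b \<or> (a = Cube x \<and> b = Lit i (y i) 0) \<or> (a = Lit i (y i) 0 \<and> b = Cube x)"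
        using that \<open>T \<subseteq> GV\<close> i by (auto simp: T_def GE_def)
      moreover have "GE (Cube y) (Lit i (y i) 0)" "GE (Lit i (y i) 0) (Cube y)"
        using xy i N_pos by (auto simp: GE_def)
      ultimately show ?thesis
        using assms(3) same xy unfolding graph_hom_def by auto
    qed
    ultimately show False
      using not_Kr_free_if_hom_clique[OF assms(1) _ _ \<open>\<phi> ` T \<subseteq> W\<close>] assms(2)
      by (simp add: T_def)
  qed
qed

lemma N_le_card_hom_image:
  assumes "sgraph W F" "Kr_free W F r" "graph_hom GV GE W F \<phi>"
  shows "N \<le> card W"
proof -
  have "\<phi> ` CubeV \<subseteq> W" "finite W"
    using assms(1,3) by (auto simp: graph_hom_def sgraph_def CubeV_def)
  then show ?thesis
    using card_inj_on_le[OF hom_inj_on_CubeV[OF assms]] card_CubeV by simp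
qed

lemma no_small_Kr_free_hom_image_G: "no_small_Kr_free_hom_image GV GE r N"
  using N_le_card_hom_image by (force simp: no_small_Kr_free_hom_image_def)

definition "common_H_nbhd u v = HV \<inter> nbhd GV GE u \<inter> nbhd GV GE v"

lemma mem_common_H_nbhd: "w \<in> common_H_nbhd u v \<longleftrightarrow> w \<in> HV \<and> GE u w \<and> GE v w"
  by (auto simp: common_H_nbhd_def nbhd_def GE_def)

lemma card_cube_face:
  assumes "i < k" "j < k" "i \<noteq> j"
  shows "card {x \<in> cube. x i = b \<and> x j = c} = 2 ^ (k - 2)"
proof -
  define X where "X t = (if t = i then {b} else if t = j then {c} else UNIV)" for t
  have "{x \<in> cube. x i = b \<and> x j = c} = Pi\<^sub>E {..<k} X"
  proof (intro equalityI subsetI)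
    fix x assume "x \<in> {x \<in> cube. x i = b \<and> x j = c}"
    then show "x \<in> Pi\<^sub>E {..<k} X"
      by (simp add: PiE_iff X_def cube_def)
  next
    fix x assume x: "x \<in> Pi\<^sub>E {..<k} X"
    then have "x i \<in> X i" "x j \<in> X j"
      using assms by (auto simp: PiE_iff)
    then show "x \<in> {x \<in> cube. x i = b \<and> x j = c}"
      using x assms by (simp add: PiE_iff X_def cube_def)
  qed
  then have "card {x \<in> cube. x i = b \<and> x j = c} = (\<Prod>t<k. card (X t))"
    by (simp add: card_PiE)
  also have "\<dots> = (\<Prod>t\<in>{..<k} - {i, j}. card (X t)) * (\<Prod>t\<in>{i, j}. card (X t))"
    using assms by (intro prod.subset_diff) auto
  also have "(\<Prod>t\<in>{..<k} - {i, j}. card (X t)) = (\<Prod>t\<in>{..<k} - {i, j}. 2)"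
    by (rule prod.cong) (auto simp: X_def)
  also have "(\<Prod>t\<in>{i, j}. card (X t)) = 1"
    using assms by (simp add: X_def)
  finally show ?thesis
    using assms by (simp add: card_Diff_subset)
qed

lemma card_Lit_block: "card (Lit i b ` {..<N}) = N"
  by (simp add: card_image inj_on_def)

lemma card_common_H_nbhd_ge_if_subset:
  assumes "C \<subseteq> common_H_nbhd u v" "n \<le> card C"
  shows "n \<le> card (common_H_nbhd u v)"
proof -
  have "finite (common_H_nbhd u v)"
    using finite_HV by (simp add: common_H_nbhd_def)
  then show ?thesis
    using assms card_mono[of "common_H_nbhd u v" C] by linarith
qed

lemma card_common_H_nbhd_ge_if_face:
  assumes "u \<in> GV" "v \<in> GV" "i < k" "j < k" "i \<noteq> j"
    and "\<And>x. x i = b \<Longrightarrow> x j = c \<Longrightarrow> adj u (Cube x) \<and> adj v (Cube x)"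
  shows "2 ^ (k - 2) \<le> card (common_H_nbhd u v)"
proof (rule card_common_H_nbhd_ge_if_subset)
  show "Cube ` {x \<in> cube. x i = b \<and> x j = c} \<subseteq> common_H_nbhd u v"
  proof
    fix w assume "w \<in> Cube ` {x \<in> cube. x i = b \<and> x j = c}"
    then obtain x where "w = Cube x" "x \<in> cube" "x i = b" "x j = c"
      by blast
    then show "w \<in> common_H_nbhd u v"
      using assms(1,2) assms(6)[of x] by (simp add: mem_common_H_nbhd GE_def mem_HV_iff)
  qed
  show "2 ^ (k - 2) \<le> card (Cube ` {x \<in> cube. x i = b \<and> x j = c})"
    using assms by (simp add: card_image inj_on_def card_cube_face)
qed

lemma card_common_H_nbhd_ge_if_block:
  assumes "u \<in> GV" "v \<in> GV" "i < k" "\<And>m. adj u (Lit i b m) \<and> adj v (Lit i b m)"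
  shows "2 ^ (k - 2) \<le> card (common_H_nbhd u v)"
proof (rule card_common_H_nbhd_ge_if_subset)
  show "Lit i b ` {..<N} \<subseteq> common_H_nbhd u v"
    using assms by (auto simp: mem_common_H_nbhd GE_def mem_HV_iff)
  show "2 ^ (k - 2) \<le> card (Lit i b ` {..<N})"
    using card_Lit_block by (simp add: N_eq)
qed

lemma card_common_H_nbhd_ge_if_facet:
  assumes "u \<in> GV" "v \<in> GV" "i < k" "\<And>x. x i = b \<Longrightarrow> adj u (Cube x) \<and> adj v (Cube x)"
  shows "2 ^ (k - 2) \<le> card (common_H_nbhd u v)"
proof -
  have "\<exists>j<k. j \<noteq> i"
    using k_ge_2 by (intro exI[of _ "if i = 0 then 1 else 0"]) auto
  then obtain j where "j < k" "j \<noteq> i"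
    by blast
  then show ?thesis
    using card_common_H_nbhd_ge_if_face[of u v i j b True] assms by blast
qed

lemma card_common_H_nbhd_ge_if_hubs:
  assumes "u \<in> GV" "v \<in> GV" "\<And>m. adj u (Hub m) \<and> adj v (Hub m)"
  shows "2 ^ (k - 2) \<le> card (common_H_nbhd u v)"
proof (rule card_common_H_nbhd_ge_if_subset)
  show "HubV \<subseteq> common_H_nbhd u v"
    using assms by (auto simp: mem_common_H_nbhd GE_def mem_HV_iff HubV_def)
  show "2 ^ (k - 2) \<le> card HubV"
    using k_ge_2 by (simp add: card_HubV N_eq)
qed

lemma card_common_H_nbhd_ge:
  assumes "u \<in> HV" "v \<in> HV" "u \<noteq> v" "\<not> adj u v"
  shows "2 ^ (k - 2) \<le> card (common_H_nbhd u v)"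
proof -
  have uv: "u \<in> GV" "v \<in> GV"
    using assms mem_HV_iff by auto
  note face = card_common_H_nbhd_ge_if_face[OF uv]
  note block = card_common_H_nbhd_ge_if_block[OF uv]
  note facet = card_common_H_nbhd_ge_if_facet[OF uv]
  note hubs = card_common_H_nbhd_ge_if_hubs[OF uv]
  show ?thesis
  proof (cases u)
    case (Cube x)
    show ?thesis
    proof (cases v)
      case (Cube y)
      show ?thesis
        by (rule hubs) (simp add: \<open>u = Cube x\<close> Cube)
    next
      case (Lit i b m)
      show ?thesis
        by (rule block[of i "x i"]) (use assms \<open>u = Cube x\<close> Lit uv in auto)
    qed (use assms \<open>u = Cube x\<close> in \<open>simp_all add: mem_HV_iff\<close>)
  next
    case (Lit i b m)
    show ?thesis
    proof (cases v)
      case (Cube x)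
      show ?thesis
        by (rule block[of i "x i"]) (use assms \<open>u = Lit i b m\<close> Cube uv in auto)
    next
      case (Lit j c m')
      show ?thesis
      proof (cases "i = j")
        case True
        then have "b = c"
          using assms(4) \<open>u = Lit i b m\<close> Lit by simp
        show ?thesis
          by (rule facet[of i b]) (use True \<open>b = c\<close> \<open>u = Lit i b m\<close> Lit uv in auto)
      next
        case False
        show ?thesis
          by (rule face[of i j b c]) (use False \<open>u = Lit i b m\<close> Lit uv in auto)
      qed
    next
      case (Hub m')
      show ?thesis
        by (rule facet[of i b]) (use \<open>u = Lit i b m\<close> Hub uv in auto)
    qed (use assms in \<open>simp add: mem_HV_iff\<close>)
  next
    case (Hub m)
    show ?thesis
    proof (cases v)
      case (Lit j c m')
      show ?thesis
        by (rule facet[of j c]) (use \<open>u = Hub m\<close> Lit uv in auto)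
    next
      case (Hub m')
      show ?thesis
        by (rule facet[of 0 True]) (use \<open>u = Hub m\<close> Hub k_ge_2 in auto)
    qed (use assms \<open>u = Hub m\<close> in \<open>simp_all add: mem_HV_iff\<close>)
  qed (use assms in \<open>simp add: mem_HV_iff\<close>)
qed

lemma finite_common_nbhd: "finite (nbhd GV GE u \<inter> nbhd GV GE v)"
  using finite_GV by (simp add: nbhd_def)

lemma card_part_indices: "card (insert None (Some ` {..<r - 3})) = r - 2"
  using r_ge_3 by (simp add: card_image)

lemma num_Kk_common_nbhd_H_pair:
  assumes "u \<in> HV" "v \<in> HV"
  shows "card (common_H_nbhd u v) * h ^ (r - 3) \<le> num_Kk GE (nbhd GV GE u \<inter> nbhd GV GE v) (r - 2)"
proof -
  let ?I = "insert None (Some ` {..<r - 3})"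
  define Y where "Y = case_option (common_H_nbhd u v) PartV"
  have "(\<Prod>i\<in>?I. card (Y i)) \<le> num_Kk GE (nbhd GV GE u \<inter> nbhd GV GE v) (card ?I)"
  proof (rule prod_card_le_num_Kk[OF finite_common_nbhd])
    show "Y i \<subseteq> nbhd GV GE u \<inter> nbhd GV GE v" if "i \<in> ?I" for i
      using that assms
      by (auto simp: Y_def common_H_nbhd_def PartV_def nbhd_def GE_def mem_HV_iff adj_Part)
    show "disjoint_family_on Y ?I"
      by (auto simp: disjoint_family_on_def Y_def common_H_nbhd_def PartV_def mem_HV_iff)
    show "GE y z" if "i \<in> ?I" "j \<in> ?I" "i \<noteq> j" "y \<in> Y i" "z \<in> Y j" for i j y z
      using that
      by (auto simp: Y_def mem_common_H_nbhd PartV_def GE_def mem_HV_iff adj_Part adj_sym)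
  qed simp
  moreover have "(\<Prod>i\<in>?I. card (Y i)) = card (common_H_nbhd u v) * h ^ (r - 3)"
    by (simp add: Y_def prod.reindex card_PartV)
  ultimately show ?thesis
    by (simp add: card_part_indices)
qed

lemma num_Kk_common_nbhd_Part_pair:
  assumes "j < r - 3" "m < h" "m' < h"
  shows "N * (2 * k * N * h ^ (r - 4)) \<le> num_Kk GE (nbhd GV GE (Part j m) \<inter> nbhd GV GE (Part j m')) (r - 2)"
proof -
  let ?I = "insert None (Some ` {..<r - 3})"
  define Y where "Y = case_option CubeV (\<lambda>l. if l = j then HubV else PartV l)"
  have "(\<Prod>i\<in>?I. card (Y i)) \<le> num_Kk GE (nbhd GV GE (Part j m) \<inter> nbhd GV GE (Part j m')) (card ?I)"
  proof (rule prod_card_le_num_Kk[OF finite_common_nbhd])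
    show "Y i \<subseteq> nbhd GV GE (Part j m) \<inter> nbhd GV GE (Part j m')" if "i \<in> ?I" for i
      using that assms
      by (auto simp: Y_def CubeV_def HubV_def PartV_def nbhd_def GE_def split: if_splits)
    show "disjoint_family_on Y ?I"
      by (auto simp: disjoint_family_on_def Y_def CubeV_def HubV_def PartV_def)
    show "GE y z" if "i \<in> ?I" "j \<in> ?I" "i \<noteq> j" "y \<in> Y i" "z \<in> Y j" for i j y z
      using that
      by (auto simp: Y_def CubeV_def HubV_def PartV_def GE_def split: if_splits)
  qed simp
  moreover have "(\<Prod>l<r - 3. card (if l = j then HubV else PartV l)) = (\<Prod>l<r - 3. if l = j then 2 * k * N else h)"
    by (rule prod.cong) (simp_all add: card_HubV card_PartV)
  then have "(\<Prod>i\<in>?I. card (Y i)) = N * (2 * k * N * h ^ (r - 4))"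
    using assms(1) by (simp add: Y_def prod.reindex card_CubeV prod_gen_delta)
  ultimately show ?thesis
    by (simp add: card_part_indices)
qed

lemma Part_pair_count_ge:
  assumes "4 \<le> r"
  shows "2 ^ (k - 2) * h ^ (r - 3) \<le> N * (2 * k * N * h ^ (r - 4))"
proof -
  define P where "P = h ^ (r - 4)"
  have "r - 3 = Suc (r - 4)"
    using assms by simp
  then have "h ^ (r - 3) = h * P"
    unfolding P_def by (simp only: power_Suc)
  then have "2 ^ (k - 2) * h ^ (r - 3) = (2 ^ (k - 2) * (4 * k + 1)) * N * P"
    by (simp only: h_def mult_ac)
  also have "2 ^ (k - 2) * (4 * k + 1) \<le> 2 * k * N"
    using k_ge_2 by (simp add: N_eq)
  finally show ?thesis
    by (simp add: P_def ac_simps)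
qed

lemma num_Kk_common_nbhd_ge:
  assumes "u \<in> GV" "v \<in> GV" "u \<noteq> v" "\<not> GE u v"
  shows "2 ^ (k - 2) * h ^ (r - 3) \<le> num_Kk GE (nbhd GV GE u \<inter> nbhd GV GE v) (r - 2)"
proof (cases "is_Part u \<or> is_Part v")
  case False
  then have "u \<in> HV" "v \<in> HV" "\<not> adj u v"
    using assms by (auto simp: mem_HV_iff GE_def)
  then have "2 ^ (k - 2) * h ^ (r - 3) \<le> card (common_H_nbhd u v) * h ^ (r - 3)"
    using card_common_H_nbhd_ge assms(3) by (intro mult_le_mono1)
  also have "\<dots> \<le> num_Kk GE (nbhd GV GE u \<inter> nbhd GV GE v) (r - 2)"
    using \<open>u \<in> HV\<close> \<open>v \<in> HV\<close> by (rule num_Kk_common_nbhd_H_pair)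
  finally show ?thesis .
next
  case True
  have "\<not> adj u v"
    using assms by (simp add: GE_def)
  with True obtain j m m' where "u = Part j m" "v = Part j m'"
    using not_adj_Part adj_sym by (metis is_Part.elims(2))
  moreover have "j < r - 3" "m < h" "m' < h"
    using assms calculation by simp_all
  ultimately show ?thesis
    using le_trans[OF Part_pair_count_ge num_Kk_common_nbhd_Part_pair] by simp
qed

lemma real_h_eq: "real h = 4 * 2 ^ (k - 2) * (4 * real k + 1)"
  by (simp add: h_def N_eq algebra_simps)

lemma codegree_cliques_ge_G:
  assumes "0 \<le> \<epsilon>" "4 * \<epsilon> * real (r - 2) ^ (r - 2) * (4 * real k + 1) \<le> 1"
  shows "codegree_cliques_ge GV GE (r - 2) (\<epsilon> * real (card GV) ^ (r - 2))"
  unfolding codegree_cliques_ge_def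
proof (intro ballI impI)
  fix u v assume "u \<in> GV" "v \<in> GV" "u \<noteq> v \<and> \<not> GE u v"
  have "\<epsilon> * real (card GV) ^ (r - 2) \<le> \<epsilon> * (real (r - 2) * real h) ^ (r - 2)"
    using card_GV_le assms(1) by (intro mult_left_mono power_mono) (simp_all flip: of_nat_mult)
  also have "\<dots> = (4 * \<epsilon> * real (r - 2) ^ (r - 2) * (4 * real k + 1)) * (2 ^ (k - 2) * real h ^ (r - 3))"
  proof -
    define P where "P = real h ^ (r - 3)"
    have "r - 2 = Suc (r - 3)"
      using r_ge_3 by simp
    then have "\<epsilon> * (real (r - 2) * real h) ^ (r - 2) = \<epsilon> * real (r - 2) ^ (r - 2) * real h * P"
      unfolding power_mult_distrib P_def by (subst (2) \<open>r - 2 = _\<close>) (simp only: power_Suc mult_ac)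
    also have "\<dots> = (4 * \<epsilon> * real (r - 2) ^ (r - 2) * (4 * real k + 1)) * (2 ^ (k - 2) * P)"
      by (simp add: real_h_eq mult_ac)
    finally show ?thesis
      by (simp only: P_def)
  qed
  also have "\<dots> \<le> 2 ^ (k - 2) * real h ^ (r - 3)"
    by (rule mult_left_le_one_le) (use assms in simp_all)
  also have "\<dots> \<le> real (num_Kk GE (nbhd GV GE u \<inter> nbhd GV GE v) (r - 2))"
    using of_nat_mono[OF num_Kk_common_nbhd_ge] \<open>u \<in> GV\<close> \<open>v \<in> GV\<close> \<open>u \<noteq> v \<and> \<not> GE u v\<close>
    by fastforce
  finally show "\<epsilon> * real (card GV) ^ (r - 2) \<le> real (num_Kk GE (nbhd GV GE u \<inter> nbhd GV GE v) (r - 2))" .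
qed

lemma exists_dense_rigid_Kr_free_graph_G:
  assumes "0 \<le> \<epsilon>" "4 * \<epsilon> * real (r - 2) ^ (r - 2) * (4 * real k + 1) \<le> 1"
  shows "exists_dense_rigid_Kr_free_graph r \<epsilon> N"
proof -
  obtain E where "sgraph {0..<card GV} E" "Kr_free {0..<card GV} E r"
    "codegree_cliques_ge {0..<card GV} E (r - 2) (\<epsilon> * real (card GV) ^ (r - 2))"
    "no_small_Kr_free_hom_image {0..<card GV} E r N"
    using relabel_to_nat_interval[OF sgraph_G Kr_free_G codegree_cliques_ge_G[OF assms]
        no_small_Kr_free_hom_image_G] .
  moreover have "Hub 0 \<in> GV"
    using k_ge_2 N_pos by simp
  then have "0 < card GV"
    using finite_GV card_gt_0_iff by blast
  ultimately show ?thesis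
    unfolding exists_dense_rigid_Kr_free_graph_def by blast
qed

end

section \<open>Choice of the parameter \<open>k\<close>\<close>

lemma codegree_parameter_bound:
  fixes r k :: nat and \<epsilon> a :: real
  assumes "3 \<le> r" "0 < \<epsilon>" "1 < a" "real k < a + 1" "8 * real r ^ r * \<epsilon> * a = 1"
  shows "4 * \<epsilon> * real (r - 2) ^ (r - 2) * (4 * real k + 1) \<le> 1"
proof -
  have "(3::real) ^ 2 \<le> real r ^ 2"
    using assms(1) by (intro power_mono) auto
  then have "real (r - 2) ^ (r - 2) * 9 \<le> real r ^ (r - 2) * real r ^ 2"
    by (intro mult_mono power_mono) auto
  also have "\<dots> = real r ^ (r - 2 + 2)"
    by (simp only: power_add)
  also have "r - 2 + 2 = r"
    using assms(1) by simp
  finally have small: "9 * real (r - 2) ^ (r - 2) \<le> real r ^ r"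
    by simp
  have "4 * \<epsilon> * real (r - 2) ^ (r - 2) * (4 * real k + 1) \<le> 4 * \<epsilon> * real (r - 2) ^ (r - 2) * (9 * a)"
    using assms(2-4) by (intro mult_left_mono) auto
  also have "\<dots> = 4 * \<epsilon> * a * (9 * real (r - 2) ^ (r - 2))"
    by simp
  also have "\<dots> \<le> 4 * \<epsilon> * a * real r ^ r"
    using small assms(2,3) by (intro mult_left_mono) auto
  also have "\<dots> = 1 / 2"
    using assms(5) by (simp add: field_simps)
  finally show ?thesis
    by simp
qed

lemma exists_dense_rigid_Kr_free_graph_construction:
  assumes "3 \<le> r" "0 < \<epsilon>" "1 < a" "8 * real r ^ r * \<epsilon> * a = 1"
  shows "exists_dense_rigid_Kr_free_graph r \<epsilon> (2 powr a)"
proof -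
  define k where "k = nat \<lceil>a\<rceil>"
  have "a \<le> real k" "real k < a + 1" "2 \<le> k"
    using assms(3) by (auto simp: k_def) linarith+
  interpret construction k r
    using \<open>2 \<le> k\<close> assms(1) by unfold_locales
  have "exists_dense_rigid_Kr_free_graph r \<epsilon> N"
    using assms \<open>real k < a + 1\<close>
    by (intro exists_dense_rigid_Kr_free_graph_G codegree_parameter_bound[of r \<epsilon> a]) auto
  moreover have "2 powr a \<le> real N"
    using powr_mono[OF \<open>a \<le> real k\<close>, of 2] by (simp add: N_def powr_realpow)
  ultimately show ?thesis
    by (rule exists_dense_rigid_Kr_free_graph_mono)
qed

theorem theorem1p7:
  fixes r :: nat and \<epsilon> :: real
  assumes "r \<ge> 3" and "\<epsilon> > 0"
  shows "\<exists>n::nat. n > 0 \<and> (\<exists>E :: nat \<Rightarrow> nat \<Rightarrow> bool.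
           sgraph {0..<n} E \<and> Kr_free {0..<n} E r \<and>
           (\<forall>u\<in>{0..<n}. \<forall>v\<in>{0..<n}. u \<noteq> v \<and> \<not> E u v \<longrightarrow>
              real (num_Kk E (nbhd {0..<n} E u \<inter> nbhd {0..<n} E v) (r - 2)) \<ge> \<epsilon> * real n ^ (r - 2)) \<and>
           \<not> (\<exists>(W :: nat set) (F :: nat \<Rightarrow> nat \<Rightarrow> bool) (\<phi> :: nat \<Rightarrow> nat).
                 sgraph W F \<and> Kr_free W F r \<and>
                 real (card W) < 2 powr (1 / (8 * real r ^ r * \<epsilon>)) \<and>
                 graph_hom {0..<n} E W F \<phi>))"
proof -
  define a where "a = 1 / (8 * real r ^ r * \<epsilon>)"
  have "exists_dense_rigid_Kr_free_graph r \<epsilon> (2 powr a)"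
  proof (cases "a \<le> 1")
    case True
    then have "2 powr a \<le> 2"
      using powr_mono[of a 1 2] by simp
    then show ?thesis
      using exists_dense_rigid_Kr_free_graph_edge[OF assms(1)] exists_dense_rigid_Kr_free_graph_mono
      by blast
  next
    case False
    then show ?thesis
      using assms by (intro exists_dense_rigid_Kr_free_graph_construction) (auto simp: a_def)
  qed
  then show ?thesis
    unfolding exists_dense_rigid_Kr_free_graph_def codegree_cliques_ge_def
      no_small_Kr_free_hom_image_def a_def .
qed

end
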